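(* If a semigroup $\langle A;\cdot\rangle$ is a Hamiltonian algebra, then for every $a\in A$ there exist integers $i,j$ with $1\le i<j$ such that $a^i=a^j$.
   Context: A semigroup is regarded as an algebra $\langle A;\cdot\rangle$ with one associative binary operation; its subalgebras are the nonempty subsets closed under $\cdot$. An algebra is called Hamiltonian if the universe of every subalgebra is an equivalence class (block) of some congruence of the algebra. *)

theory Defs
  imports Main
begin

definition semigroup_on :: "'a set \<Rightarrow> ('a \<Rightarrow> 'a \<Rightarrow> 'a) \<Rightarrow> bool" where
  "semigroup_on A f \<longleftrightarrow> (\<forall>x\<in>A. \<forall>y\<in>A. f x y \<in> A) \<and>
     (\<forall>x\<in>A. \<forall>y\<in>A. \<forall>z\<in>A. f (f x y) z = f x (f y z))"

definition subalgebra_on :: "'a set \<Rightarrow> ('a \<Rightarrow> 'a \<Rightarrow> 'a) \<Rightarrow> 'a set \<Rightarrow> bool" where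
  "subalgebra_on A f B \<longleftrightarrow> B \<noteq> {} \<and> B \<subseteq> A \<and> (\<forall>x\<in>B. \<forall>y\<in>B. f x y \<in> B)"

definition congruence_on :: "'a set \<Rightarrow> ('a \<Rightarrow> 'a \<Rightarrow> 'a) \<Rightarrow> 'a rel \<Rightarrow> bool" where
  "congruence_on A f \<theta> \<longleftrightarrow> equiv A \<theta> \<and>
     (\<forall>x x' y y'. (x, x') \<in> \<theta> \<longrightarrow> (y, y') \<in> \<theta> \<longrightarrow> (f x y, f x' y') \<in> \<theta>)"

definition hamiltonian_on :: "'a set \<Rightarrow> ('a \<Rightarrow> 'a \<Rightarrow> 'a) \<Rightarrow> bool" where
  "hamiltonian_on A f \<longleftrightarrow> (\<forall>B. subalgebra_on A f B \<longrightarrow>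
     (\<exists>\<theta>. congruence_on A f \<theta> \<and> B \<in> A // \<theta>))"

text \<open>Positive powers: spow f a n = a^(n+1).\<close>
fun spow :: "('a \<Rightarrow> 'a \<Rightarrow> 'a) \<Rightarrow> 'a \<Rightarrow> nat \<Rightarrow> 'a" where
  "spow f a 0 = a"
| "spow f a (Suc n) = f (spow f a n) a"

definition pow1 :: "('a \<Rightarrow> 'a \<Rightarrow> 'a) \<Rightarrow> 'a \<Rightarrow> nat \<Rightarrow> 'a" where
  "pow1 f a i = spow f a (i - 1)"

end

theory Submission
  imports Defs
begin

text \<open>The set B = {a^2, a^4, a^5, a^6, ...} omits a and a^3 and is closed under
  multiplication, since a product of two positive powers has exponent at least 2 and equals
  2 only for a * a. If B is a block of a congruence, then a^2 and a^4 are congruent, hence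
  so are a^3 and a^5, and a^3 lies in B. Thus a^3 coincides with another power of a.\<close>

lemma spow_in_carrier: "semigroup_on A f \<Longrightarrow> a \<in> A \<Longrightarrow> spow f a n \<in> A"
  by (induction n) (auto simp: semigroup_on_def)

lemma spow_add:
  assumes "semigroup_on A f" and "a \<in> A"
  shows "f (spow f a m) (spow f a n) = spow f a (m + n + 1)"
proof (induction n)
  case 0
  show ?case by simp
next
  case (Suc n)
  have "f (spow f a m) (spow f a (Suc n)) = f (f (spow f a m) (spow f a n)) a"
    using assms spow_in_carrier[OF assms] unfolding semigroup_on_def by simp
  then show ?case using Suc by simp
qed

lemma subalgebra_spow_without_cube:
  assumes "semigroup_on A f" and "a \<in> A"
  shows "subalgebra_on A f {spow f a n | n. n = 1 \<or> 3 \<le> n}"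
  unfolding subalgebra_on_def
proof (intro conjI ballI)
  show "{spow f a n | n. n = 1 \<or> 3 \<le> n} \<noteq> {}" by blast
  show "{spow f a n | n. n = 1 \<or> 3 \<le> n} \<subseteq> A"
    using spow_in_carrier[OF assms] by blast
next
  fix x y
  assume "x \<in> {spow f a n | n. n = 1 \<or> 3 \<le> n}" "y \<in> {spow f a n | n. n = 1 \<or> 3 \<le> n}"
  then obtain m n where "x = spow f a m" "y = spow f a n" "1 \<le> m" "1 \<le> n"
    by (auto simp del: spow.simps)
  then have "f x y = spow f a (m + n + 1)" and "3 \<le> m + n + 1"
    using spow_add[OF assms] by auto
  then show "f x y \<in> {spow f a n | n. n = 1 \<or> 3 \<le> n}" by blast
qed

lemma congruence_block_right_mult:
  assumes "congruence_on A f \<theta>" and "B \<in> A // \<theta>"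
    and "x \<in> B" and "y \<in> B" and "z \<in> A" and "f x z \<in> B"
  shows "f y z \<in> B"
proof -
  have equiv: "equiv A \<theta>" using assms(1) unfolding congruence_on_def by blast
  have "(x, y) \<in> \<theta>" using quotient_eq_iff[OF equiv assms(2) assms(2)] assms(3,4) by blast
  moreover have "(z, z) \<in> \<theta>" using equiv assms(5) by (meson equiv_def refl_onD)
  ultimately have "(f x z, f y z) \<in> \<theta>" using assms(1) unfolding congruence_on_def by blast
  then show ?thesis using in_quotient_imp_closed[OF equiv assms(2,6)] by blast
qed

lemma hamiltonian_cube_repeats:
  assumes "semigroup_on A f" and "hamiltonian_on A f" and "a \<in> A"
  obtains n where "n \<noteq> 2" and "spow f a 2 = spow f a n"
proof -
  let ?B = "{spow f a n | n. n = 1 \<or> 3 \<le> n}"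
  obtain \<theta> where cong: "congruence_on A f \<theta>" and block: "?B \<in> A // \<theta>"
    using assms(2) subalgebra_spow_without_cube[OF assms(1,3)]
    unfolding hamiltonian_on_def by blast
  have a2: "spow f a 1 \<in> ?B" and a4: "spow f a 3 \<in> ?B"
    by (auto simp del: spow.simps)
  have "spow f a 4 = f (spow f a 3) a"
    by (simp add: numeral_eq_Suc)
  moreover have "spow f a 4 \<in> ?B"
    by (auto simp del: spow.simps)
  ultimately have "f (spow f a 3) a \<in> ?B"
    by (simp only:)
  then have "f (spow f a 1) a \<in> ?B"
    by (rule congruence_block_right_mult[OF cong block a4 a2 assms(3)])
  moreover have "spow f a 2 = f (spow f a 1) a"
    by (simp add: numeral_eq_Suc)
  ultimately obtain n where "n = 1 \<or> 3 \<le> n" and "spow f a 2 = spow f a n"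
    by auto
  then show ?thesis using that[of n] by (auto simp del: spow.simps)
qed

theorem mainTheorem4:
  fixes A :: "'a set" and f :: "'a \<Rightarrow> 'a \<Rightarrow> 'a"
  assumes "semigroup_on A f"
    and "hamiltonian_on A f"
  shows "\<forall>a\<in>A. \<exists>i j :: nat. 1 \<le> i \<and> i < j \<and> pow1 f a i = pow1 f a j"
proof
  fix a assume "a \<in> A"
  then obtain n where "n \<noteq> 2" and eq: "pow1 f a 3 = pow1 f a (n + 1)"
    using hamiltonian_cube_repeats[OF assms] by (auto simp: pow1_def)
  show "\<exists>i j :: nat. 1 \<le> i \<and> i < j \<and> pow1 f a i = pow1 f a j"
  proof (cases "n < 2")
    case True
    then show ?thesis using eq by (intro exI[of _ "n + 1"] exI[of _ 3]) simp
  next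
    case False
    with \<open>n \<noteq> 2\<close> show ?thesis using eq by (intro exI[of _ 3] exI[of _ "n + 1"]) simp
  qed
qed

end
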